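(* Assume the following statement holds: for every base $b>2$, every integer $n$ with $1<n<b$, and every symmetric $(n,b)$-palintiple with carries $c_k,\ldots,c_0$, one has $c_j\equiv 0 \pmod{n-1}$ for all $0\le j\le k$. Then, for integers $b>2$ and $1<n<b$, an $(n,b)$-palintiple is asymmetric if and only if $\gcd(b-n,n^2-1)\le n-1$ and $n+1$ does not divide $b$.
   Context: Let $b>2$ be an integer base and write $(d_k,d_{k-1},\ldots,d_0)_b=\sum_{j=0}^k d_j b^j$ with $0\le d_j<b$. A natural number $p=(d_k,\ldots,d_0)_b$ with $d_k\neq 0$ and $d_0\neq 0$ that is not a base-$b$ palindrome is an $(n,b)$-palintiple if $(d_k,\ldots,d_0)_b=n\,(d_0,d_1,\ldots,d_k)_b$ for an integer $n$ with $1<n<b$. Its carries $c_0,\ldots,c_{k+1}$ are the carries arising in the base-$b$ multiplication of $(d_0,\ldots,d_k)_b$ by $n$: $c_0=0$ and $n d_{k-j}+c_j=d_j+b\,c_{j+1}$ for $0\le j\le k$ (so $c_{k+1}=0$). The palintiple is symmetric if $c_j=c_{k-j}$ for all $0\le j\le k$, shifted-symmetric if $c_j=c_{k-j+1}$ for all $0\le j\le k$, and asymmetric if it is neither symmetric nor shifted-symmetric. *)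

theory Defs
  imports Main
begin

text \<open>A base-b digit string (d_k,...,d_0) is represented by k and a function d (d j = d_j).\<close>

definition num :: "nat \<Rightarrow> nat \<Rightarrow> (nat \<Rightarrow> nat) \<Rightarrow> nat" where
  "num b k d = (\<Sum>j\<le>k. d j * b ^ j)"

definition palintiple :: "nat \<Rightarrow> nat \<Rightarrow> nat \<Rightarrow> (nat \<Rightarrow> nat) \<Rightarrow> bool" where
  "palintiple n b k d \<longleftrightarrow>
     1 < n \<and> n < b \<and> (\<forall>j\<le>k. d j < b) \<and> d k \<noteq> 0 \<and> d 0 \<noteq> 0 \<and>
     (\<exists>j\<le>k. d j \<noteq> d (k - j)) \<and>
     num b k d = n * num b k (\<lambda>j. d (k - j))"

text \<open>Carries of the base-b multiplication of (d_0,...,d_k)_b by n: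
  c_0 = 0, n d_(k-j) + c_j = d_j + b c_(j+1).\<close>
fun carry :: "nat \<Rightarrow> nat \<Rightarrow> nat \<Rightarrow> (nat \<Rightarrow> nat) \<Rightarrow> nat \<Rightarrow> nat" where
  "carry n b k d 0 = 0"
| "carry n b k d (Suc j) = (n * d (k - j) + carry n b k d j) div b"

definition symmetric_pal :: "nat \<Rightarrow> nat \<Rightarrow> nat \<Rightarrow> (nat \<Rightarrow> nat) \<Rightarrow> bool" where
  "symmetric_pal n b k d \<longleftrightarrow> (\<forall>j\<le>k. carry n b k d j = carry n b k d (k - j))"

definition shifted_symmetric_pal :: "nat \<Rightarrow> nat \<Rightarrow> nat \<Rightarrow> (nat \<Rightarrow> nat) \<Rightarrow> bool" where
  "shifted_symmetric_pal n b k d \<longleftrightarrow> (\<forall>j\<le>k. carry n b k d j = carry n b k d (k - j + 1))"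

definition asymmetric_pal :: "nat \<Rightarrow> nat \<Rightarrow> nat \<Rightarrow> (nat \<Rightarrow> nat) \<Rightarrow> bool" where
  "asymmetric_pal n b k d \<longleftrightarrow> \<not> symmetric_pal n b k d \<and> \<not> shifted_symmetric_pal n b k d"

end

theory Submission
  imports Defs
begin

text \<open>Multiplying the reversal by n digit by digit gives the carry equations
  d_j + b c_(j+1) = n d_(k-j) + c_j with 0 \<le> c_j < n and c_0 = c_(k+1) = 0.
  Pairing the equations for j and k - j: if n + 1 divides b, then n + 1 divides
  c_j - c_(k-j), which is therefore 0. If g = gcd(b - n, n^2 - 1) \<ge> n, then
  n (c_(j+1) - c_(k-j)) \<equiv> c_j - c_(k+1-j) modulo g, and n is a unit modulo g,
  so by induction from c_0 = c_(k+1) = 0 all these differences vanish.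
  Conversely, symmetry together with the assumed divisibility by n - 1 forces
  c_1 = n - 1 and then b = (n + 1) d_0; shifted symmetry with g < n forces every
  carry to vanish, contradicting d_0 = n^2 d_0.\<close>

lemma sum_digits_less_power:
  assumes "\<forall>i\<le>k. e i < (b::nat)"
  shows "(\<Sum>i\<le>k. e i * b ^ i) < b ^ Suc k"
  using assms
proof (induction k)
  case 0
  then show ?case by simp
next
  case (Suc k)
  have "(\<Sum>i\<le>k. e i * b ^ i) < b ^ Suc k"
    using Suc by simp
  moreover have "(e (Suc k) + 1) * b ^ Suc k \<le> b * b ^ Suc k"
    using Suc.prems by (intro mult_right_mono) (auto simp: Suc_le_eq)
  ultimately show ?case by (simp add: algebra_simps)
qed

lemma digits_eq_if_sum_eq:
  assumes "\<forall>i\<le>k. e i < (b::nat)" "\<forall>i\<le>k. f i < b"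
    and "(\<Sum>i\<le>k. e i * b ^ i) = (\<Sum>i\<le>k. f i * b ^ i)" "i \<le> k"
  shows "e i = f i"
  using assms
proof (induction k arbitrary: i)
  case 0
  then show ?case by simp
next
  case (Suc k)
  let ?E = "\<Sum>i\<le>k. e i * b ^ i" and ?F = "\<Sum>i\<le>k. f i * b ^ i" and ?B = "b ^ Suc k"
  have bounds: "?E < ?B" "?F < ?B"
    using Suc.prems sum_digits_less_power[of k e b] sum_digits_less_power[of k f b] by simp_all
  have eq: "?E + e (Suc k) * ?B = ?F + f (Suc k) * ?B"
    using Suc.prems(3) by simp
  have "?E = ?F"
    using arg_cong[OF eq, of "\<lambda>x. x mod ?B"] bounds by simp
  moreover have "e (Suc k) = f (Suc k)"
    using arg_cong[OF eq, of "\<lambda>x. x div ?B"] bounds by (simp add: div_add1_eq split: if_splits)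
  ultimately show ?case
    using Suc.IH[of i] Suc.prems by (cases "i = Suc k") auto
qed

lemma dvd_abs_less_imp_eq_0:
  fixes x m :: int
  assumes "m dvd x" "\<bar>x\<bar> < m"
  shows "x = 0"
  using assms dvd_imp_le_int by force

lemma eq_0_if_mult_eq_and_small:
  fixes a m x y :: nat
  assumes eq: "m * x = a * y" and small: "y * gcd a m < m"
  shows "y = 0"
proof -
  let ?g = "gcd a m"
  have g_pos: "0 < ?g"
    using small by (cases "m = 0") auto
  obtain a' m' where a': "a = a' * ?g" and m': "m = m' * ?g" and "coprime a' m'"
    using gcd_coprime_exists[of a m] g_pos by auto
  then have "?g * (m' * x) = ?g * (a' * y)"
    using eq by (metis mult.commute mult.left_commute)
  then have "m' * x = a' * y"
    using g_pos by auto
  then have "m' dvd a' * y"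
    by (metis dvd_triv_left)
  then have "m' dvd y"
    using \<open>coprime a' m'\<close> by (simp add: coprime_commute coprime_dvd_mult_right_iff)
  moreover have "y < m'"
    using small by (subst (asm) (2) m') simp
  ultimately show ?thesis
    using dvd_imp_le by fastforce
qed

lemma long_multiplication:
  "n * (\<Sum>i<J. d (k - i) * b ^ i) =
     (\<Sum>i<J. ((n * d (k - i) + carry n b k d i) mod b) * b ^ i) + carry n b k d J * b ^ J"
proof (induction J)
  case 0
  then show ?case by simp
next
  case (Suc J)
  let ?x = "n * d (k - J) + carry n b k d J"
  have "?x * b ^ J = (?x mod b) * b ^ J + (?x div b) * b ^ Suc J"
    by (metis add_mult_distrib mod_div_mult_eq mult.assoc mult.commute power_Suc)
  then show ?case
    using Suc by (simp add: algebra_simps)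
qed

lemma carry_less_multiplier:
  assumes "\<forall>j\<le>k. d j < b" "0 < n"
  shows "carry n b k d j < n"
proof (induction j)
  case 0
  then show ?case using assms by simp
next
  case (Suc j)
  have "n * d (k - j) + carry n b k d j < n * (d (k - j) + 1)"
    using Suc by simp
  also have "\<dots> \<le> n * b"
    using assms(1) by (intro mult_left_mono) (auto simp: Suc_le_eq)
  finally show ?case
    by (simp add: less_mult_imp_div_less mult.commute)
qed

locale carry_recurrence =
  fixes n b k :: nat and d c :: "nat \<Rightarrow> nat"
  assumes n_gt_1: "1 < n" and n_less_b: "n < b"
    and digit_eq: "j \<le> k \<Longrightarrow> d j + b * c (Suc j) = n * d (k - j) + c j"
    and carry_less: "c j < n"
    and carry_0: "c 0 = 0" and carry_Suc_k: "c (Suc k) = 0"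

lemma palintiple_carry_recurrence:
  assumes p: "palintiple n b k d"
  shows "carry_recurrence n b k d (carry n b k d)"
proof -
  let ?c = "carry n b k d"
  define e where "e i = (n * d (k - i) + ?c i) mod b" for i
  have digits: "\<forall>j\<le>k. d j < b" and n_gt_1: "1 < n" and n_less_b: "n < b"
    and eq: "num b k d = n * num b k (\<lambda>j. d (k - j))"
    using p unfolding palintiple_def by auto
  have expansion: "num b k d = (\<Sum>i\<le>k. e i * b ^ i) + ?c (Suc k) * b ^ Suc k"
    using eq long_multiplication[of n d k b "Suc k"]
    unfolding e_def num_def by (simp add: lessThan_Suc_atMost)
  have "num b k d < b ^ Suc k"
    unfolding num_def using digits by (rule sum_digits_less_power)
  then have "?c (Suc k) * b ^ Suc k < b ^ Suc k"
    using expansion by linarith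
  then have carry_Suc_k: "?c (Suc k) = 0"
    by simp
  have "\<forall>i\<le>k. e i < b"
    unfolding e_def using n_less_b by simp
  moreover have "(\<Sum>i\<le>k. d i * b ^ i) = (\<Sum>i\<le>k. e i * b ^ i)"
    using expansion carry_Suc_k unfolding num_def by simp
  ultimately have digit_e: "d j = e j" if "j \<le> k" for j
    using digits_eq_if_sum_eq[OF digits _ _ that] by blast
  have "d j + b * ?c (Suc j) = n * d (k - j) + ?c j" if "j \<le> k" for j
    using digit_e[OF that] unfolding e_def by (simp add: mod_mult_div_eq)
  then show ?thesis
    using carry_less_multiplier[OF digits] n_gt_1 n_less_b carry_Suc_k
    by unfold_locales auto
qed

context carry_recurrence
begin

lemma first_digit_eq:
  assumes "c k = 0"
  shows "d 0 + b * c 1 = n ^ 2 * d 0"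
proof -
  have "d 0 + b * c 1 = n * d k"
    using digit_eq[of 0] carry_0 by simp
  moreover have "d k = n * d 0"
    using digit_eq[of k] carry_Suc_k assms by simp
  ultimately show ?thesis
    by (simp add: power2_eq_square)
qed

lemma first_carry_pos:
  assumes "d 0 \<noteq> 0" "c k = 0"
  shows "0 < c 1"
proof (rule ccontr)
  assume "\<not> 0 < c 1"
  then have "d 0 = n ^ 2 * d 0"
    using first_digit_eq[OF assms(2)] by simp
  moreover have "1 * d 0 < n ^ 2 * d 0"
    using assms(1) one_less_power[OF n_gt_1, of 2] by (intro mult_strict_right_mono) auto
  ultimately show False
    by simp
qed

lemma carries_symmetric_if_dvd:
  assumes "(n + 1) dvd b" and j: "j \<le> k"
  shows "c j = c (k - j)"
proof -
  obtain t where "b = (n + 1) * t"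
    using assms(1) by blast
  then have t: "int b = (int n + 1) * int t"
    by (simp add: algebra_simps)
  have "int (d j) + int b * int (c (Suc j)) = int n * int (d (k - j)) + int (c j)"
    using arg_cong[OF digit_eq[OF j], of int] by simp
  moreover have "int (d (k - j)) + int b * int (c (Suc (k - j))) = int n * int (d j) + int (c (k - j))"
    using arg_cong[OF digit_eq[of "k - j"], of int] j by simp
  ultimately have "int (c j) - int (c (k - j)) = (int n + 1) *
      (int (d j) - int (d (k - j)) + int t * (int (c (Suc j)) - int (c (Suc (k - j)))))"
    unfolding t by (simp add: algebra_simps)
  then have "(int n + 1) dvd int (c j) - int (c (k - j))"
    by (rule dvdI)
  moreover have "\<bar>int (c j) - int (c (k - j))\<bar> < int n + 1"
    using carry_less[of j] carry_less[of "k - j"] by simp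
  ultimately show ?thesis
    by (auto dest: dvd_abs_less_imp_eq_0)
qed

lemma dvd_if_carries_symmetric:
  assumes "d 0 \<noteq> 0" and sym: "\<forall>j\<le>k. c j = c (k - j)" and "(n - 1) dvd c 1"
  shows "(n + 1) dvd b"
proof -
  have "c k = 0"
    using sym[rule_format, of k] carry_0 by simp
  then have eq: "d 0 + b * c 1 = n ^ 2 * d 0" and "0 < c 1"
    using first_digit_eq first_carry_pos[OF assms(1)] by simp_all
  then have "c 1 = n - 1"
    using dvd_imp_le[OF assms(3)] carry_less[of 1] by fastforce
  then have "int (d 0) + int b * (int n - 1) = int n ^ 2 * int (d 0)"
    using arg_cong[OF eq, of int] n_gt_1 by (simp add: of_nat_diff)
  then have "(int n - 1) * int b = (int n - 1) * ((int n + 1) * int (d 0))"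
    by (simp add: algebra_simps power2_eq_square)
  then have "int b = (int n + 1) * int (d 0)"
    using n_gt_1 by simp
  then have "int b = int ((n + 1) * d 0)"
    by (simp only: of_nat_mult of_nat_add of_nat_1)
  then have "b = (n + 1) * d 0"
    by (simp only: of_nat_eq_iff)
  then show ?thesis
    by (rule dvdI)
qed

lemma reflected_carry_difference_eq:
  assumes j: "j \<le> k"
  shows "int n * (int (c (Suc j)) - int (c (k - j))) - (int (c j) - int (c (Suc (k - j))))
    = (int n ^ 2 - 1) * (int (d j) - int (c (Suc (k - j))))
      - (int b - int n) * (int (c (Suc j)) + int n * int (c (Suc (k - j))))"
proof -
  have cj: "int (c j) = int (d j) + int b * int (c (Suc j)) - int n * int (d (k - j))"
    using arg_cong[OF digit_eq[OF j], of int] by simp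
  have ckj: "int (c (k - j)) = int (d (k - j)) + int b * int (c (Suc (k - j))) - int n * int (d j)"
    using arg_cong[OF digit_eq[of "k - j"], of int] j by simp
  show ?thesis
    by (simp only: cj ckj) (simp add: algebra_simps power2_eq_square)
qed

lemma dvd_reflected_carry_difference:
  fixes G :: int
  assumes G_b: "G dvd int b - int n" and G_n: "G dvd int n ^ 2 - 1" and "j \<le> Suc k"
  shows "G dvd int (c j) - int (c (Suc k - j))"
  using \<open>j \<le> Suc k\<close>
proof (induction j)
  case 0
  then show ?case
    using carry_0 carry_Suc_k by simp
next
  case (Suc j)
  then have j: "j \<le> k" and IH: "G dvd int (c j) - int (c (Suc (k - j)))"
    by (simp_all add: Suc_diff_le)
  let ?\<delta> = "int (c (Suc j)) - int (c (k - j))"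
  have "G dvd int n * ?\<delta> - (int (c j) - int (c (Suc (k - j))))"
    unfolding reflected_carry_difference_eq[OF j] using G_b G_n by simp
  then have "G dvd int n * ?\<delta>"
    using IH by (metis diff_add_cancel dvd_add)
  then have "G dvd int n * (int n * ?\<delta>) - (int n ^ 2 - 1) * ?\<delta>"
    using G_n by simp
  moreover have "int n * (int n * ?\<delta>) - (int n ^ 2 - 1) * ?\<delta> = ?\<delta>"
    by (simp add: algebra_simps power2_eq_square)
  ultimately show ?case
    by simp
qed

lemma carries_shifted_symmetric_if_gcd:
  assumes "n \<le> gcd (b - n) (n ^ 2 - 1)" and j: "j \<le> k"
  shows "c j = c (k - j + 1)"
proof -
  let ?G = "int (gcd (b - n) (n ^ 2 - 1))"
  have "?G dvd int (b - n)" "?G dvd int (n ^ 2 - 1)"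
    by (simp_all only: of_nat_dvd_iff) simp_all
  then have "?G dvd int b - int n" "?G dvd int n ^ 2 - 1"
    using n_gt_1 n_less_b by (simp_all add: of_nat_diff)
  then have "?G dvd int (c j) - int (c (Suc k - j))"
    using j by (intro dvd_reflected_carry_difference) simp_all
  moreover have "\<bar>int (c j) - int (c (Suc k - j))\<bar> < ?G"
    using carry_less[of j] carry_less[of "Suc k - j"] assms(1) by simp
  ultimately show ?thesis
    using j dvd_abs_less_imp_eq_0 by (fastforce simp: Suc_diff_le)
qed

lemma shifted_symmetric_carry_step:
  assumes sh: "\<forall>j\<le>k. c j = c (k - j + 1)" and j: "j \<le> k" and "c j = 0"
  shows "(n ^ 2 - 1) * d j = (b - n) * c (Suc j)"
proof -
  have "c (Suc (k - j)) = 0"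
    using sh[rule_format, OF j] \<open>c j = 0\<close> j by (simp add: Suc_diff_le)
  moreover have "c (k - j) = c (Suc j)"
  proof (cases "j < k")
    case True
    then show ?thesis
      using sh[rule_format, of "Suc j"] by (simp add: Suc_diff_Suc)
  next
    case False
    then show ?thesis
      using j carry_0 carry_Suc_k by simp
  qed
  ultimately have "d (k - j) = n * d j + c (Suc j)"
    using digit_eq[of "k - j"] j by simp
  then have "int (d j) + int b * int (c (Suc j)) = int n * (int n * int (d j) + int (c (Suc j)))"
    using arg_cong[OF digit_eq[OF j], of int] \<open>c j = 0\<close> by simp
  then have "int ((n ^ 2 - 1) * d j) = int ((b - n) * c (Suc j))"
    using n_gt_1 n_less_b by (simp add: of_nat_diff algebra_simps power2_eq_square)
  then show ?thesis
    by (simp only: of_nat_eq_iff)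
qed

lemma gcd_if_carries_shifted_symmetric:
  assumes "d 0 \<noteq> 0" and sh: "\<forall>j\<le>k. c j = c (k - j + 1)"
  shows "n \<le> gcd (b - n) (n ^ 2 - 1)"
proof (rule ccontr)
  assume "\<not> n \<le> gcd (b - n) (n ^ 2 - 1)"
  then have small: "c j * gcd (b - n) (n ^ 2 - 1) < n ^ 2 - 1" for j
  proof -
    have "c j * gcd (b - n) (n ^ 2 - 1) \<le> (n - 1) * (n - 1)"
      using carry_less[of j] \<open>\<not> n \<le> gcd (b - n) (n ^ 2 - 1)\<close> by (intro mult_mono) auto
    also have "\<dots> < (n - 1) * (n + 1)"
      using n_gt_1 by (intro mult_strict_left_mono) simp_all
    also have "\<dots> = n ^ 2 - 1"
      by (cases n) (simp_all add: power2_eq_square)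
    finally show ?thesis .
  qed
  have "c j = 0" if "j \<le> Suc k" for j
    using that
  proof (induction j)
    case 0
    then show ?case
      using carry_0 by simp
  next
    case (Suc j)
    then have "(n ^ 2 - 1) * d j = (b - n) * c (Suc j)"
      using shifted_symmetric_carry_step[OF sh] by simp
    then show ?case
      using eq_0_if_mult_eq_and_small small by blast
  qed
  then have "c 1 = 0" "c k = 0"
    by simp_all
  then show False
    using first_carry_pos[OF assms(1)] by simp
qed

end

theorem corollary2:
  assumes H: "\<forall>b n k d. 2 < b \<and> 1 < n \<and> n < b \<and> palintiple n b k d \<and> symmetric_pal n b k d
                 \<longrightarrow> (\<forall>j\<le>k. (n - 1) dvd carry n b k d j)"
    and b: "2 < (b::nat)" and n1: "1 < n" and nb: "n < b"
    and p: "palintiple n b k d"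
  shows "asymmetric_pal n b k d \<longleftrightarrow> gcd (b - n) (n^2 - 1) \<le> n - 1 \<and> \<not> (n + 1) dvd b"
proof -
  interpret carry_recurrence n b k d "carry n b k d"
    using p by (rule palintiple_carry_recurrence)
  have d0: "d 0 \<noteq> 0"
    using p unfolding palintiple_def by simp
  have "k \<noteq> 0"
  proof
    assume "k = 0"
    then show False
      using p unfolding palintiple_def by simp
  qed
  have symmetric: "symmetric_pal n b k d \<longleftrightarrow> (n + 1) dvd b"
  proof
    assume sym: "symmetric_pal n b k d"
    then have "(n - 1) dvd carry n b k d 1"
      using H[rule_format, of b n k d 1] b n1 nb p \<open>k \<noteq> 0\<close> by simp
    then show "(n + 1) dvd b"
      using dvd_if_carries_symmetric[OF d0] sym unfolding symmetric_pal_def by blast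
  next
    assume "(n + 1) dvd b"
    then show "symmetric_pal n b k d"
      unfolding symmetric_pal_def using carries_symmetric_if_dvd by blast
  qed
  have shifted: "shifted_symmetric_pal n b k d \<longleftrightarrow> n \<le> gcd (b - n) (n ^ 2 - 1)"
    unfolding shifted_symmetric_pal_def
    using carries_shifted_symmetric_if_gcd gcd_if_carries_shifted_symmetric[OF d0] by blast
  show ?thesis
    unfolding asymmetric_pal_def symmetric shifted using n1 by auto
qed

end
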